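(* Let $G$ be a finite abelian $p$-group ($p$ any prime). Then the lattice $\mathrm{Char}(G)$ of characteristic subgroups of $G$ is directly indecomposable, i.e. it is not isomorphic to a direct product of two nontrivial lattices.
   Context: A lattice is nontrivial if it has more than one element. *)

theory Defs
  imports "HOL-Algebra.Algebra"
begin

definition characteristic_subgroup :: "'a set \<Rightarrow> ('a, 'b) monoid_scheme \<Rightarrow> bool" where
  "characteristic_subgroup H G \<longleftrightarrow>
     subgroup H G \<and> (\<forall>\<phi> \<in> iso G G. \<phi> ` H = H)"

text \<open>The set of characteristic subgroups of G (ordered by inclusion, this is the lattice Char(G)).\<close>
definition Char :: "('a, 'b) monoid_scheme \<Rightarrow> 'a set set" where
  "Char G = {H. characteristic_subgroup H G}"

end

theory Submission
  imports Defs
begin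

text \<open>If Char(G) were isomorphic to A \<times> B with A and B nontrivial, the preimages H of
(top, bot) and K of (bot, top) would be nontrivial characteristic subgroups with H \<inter> K = 1 and
HK = G, because Char(G) is closed under intersections and products. But such an H is never
characteristic: pick a maximal subgroup N containing K, an element x of H outside N and an element
y of K of order p. As G/N is cyclic of order p and generated by the image of x, each g lies in a
coset x^c(g) N with c(g) unique modulo p, and g \<mapsto> g y^c(g) is an automorphism of G mapping x
to xy, which lies outside H.\<close>

definition maximal_subgroup :: "'a set \<Rightarrow> ('a, 'b) monoid_scheme \<Rightarrow> bool" where
  "maximal_subgroup N G \<longleftrightarrow> subgroup N G \<and> N \<noteq> carrier G \<and>
     (\<forall>L. subgroup L G \<longrightarrow> N \<subseteq> L \<longrightarrow> L = N \<or> L = carrier G)"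

lemma (in group) subset_set_mult_left:
  assumes "H \<subseteq> carrier G" and "subgroup K G"
  shows "H \<subseteq> H <#> K"
proof
  fix h assume "h \<in> H"
  then have "h = h \<otimes> \<one>" and "\<one> \<in> K"
    using assms subgroup.one_closed by auto
  then show "h \<in> H <#> K" unfolding set_mult_def using \<open>h \<in> H\<close> by blast
qed

lemma (in group) subset_set_mult_right:
  assumes "subgroup H G" and "K \<subseteq> carrier G"
  shows "K \<subseteq> H <#> K"
proof
  fix k assume "k \<in> K"
  then have "k = \<one> \<otimes> k" and "\<one> \<in> H"
    using assms subgroup.one_closed by auto
  then show "k \<in> H <#> K" unfolding set_mult_def using \<open>k \<in> K\<close> by blast
qed

lemma (in group) int_pow_coprime_mem:
  assumes "subgroup N G" "x \<in> carrier G" "x [^] (a::int) \<in> N" "x [^] (b::int) \<in> N" "coprime a b"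
  shows "x \<in> N"
proof -
  obtain u v where uv: "u * a + v * b = 1"
    using bezout_int[of a b] assms(5) by (metis coprime_iff_gcd_eq_1)
  have "x = x [^] (a * u + b * v)" using uv assms(2) by (simp add: algebra_simps)
  also have "\<dots> = (x [^] a) [^] u \<otimes> (x [^] b) [^] v"
    using assms(2) by (simp add: int_pow_mult int_pow_pow)
  also have "\<dots> \<in> N" using assms
    by (simp add: subgroup.m_closed subgroup_int_pow_closed)
  finally show ?thesis .
qed

lemma (in group) exists_maximal_subgroup:
  assumes "finite (carrier G)" and "subgroup K G" and "K \<noteq> carrier G"
  obtains N where "maximal_subgroup N G" and "K \<subseteq> N"
proof -
  define S where "S = {L. subgroup L G \<and> K \<subseteq> L \<and> L \<noteq> carrier G}"
  have "S \<subseteq> Pow (carrier G)" unfolding S_def using subgroup.subset by blast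
  then have "finite S" using assms(1) finite_subset by blast
  moreover have "K \<in> S" using assms unfolding S_def by blast
  ultimately have "Max (card ` S) \<in> card ` S" by (intro Max_in) auto
  then obtain N where N: "N \<in> S" and N_card: "card N = Max (card ` S)" by (metis imageE)
  have N_max: "card L \<le> card N" if "L \<in> S" for L
    using N_card Max_ge \<open>finite S\<close> that by simp
  have "L = N \<or> L = carrier G" if L: "subgroup L G" "N \<subseteq> L" for L
  proof (rule disjCI)
    assume "L \<noteq> carrier G"
    then have "card L \<le> card N" using L N by (intro N_max) (auto simp: S_def)
    moreover have "finite L" using L(1) subgroup.subset assms(1) finite_subset by blast
    ultimately show "L = N" using card_seteq L(2) by blast
  qed
  then show ?thesis using N that unfolding S_def maximal_subgroup_def by blast
qed

lemma (in comm_group) maximal_subgroup_set_mult_generate: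
  assumes "maximal_subgroup N G" and "z \<in> carrier G" and "z \<notin> N"
  shows "N <#> generate G {z} = carrier G"
proof -
  have N: "subgroup N G" using assms(1) unfolding maximal_subgroup_def by blast
  have Z: "subgroup (generate G {z}) G" using assms(2) by (simp add: generate_is_subgroup)
  have "z \<in> N <#> generate G {z}"
    using subset_set_mult_right[OF N, of "generate G {z}"] generate.incl[of z "{z}" G] Z subgroup.subset
    by blast
  then show ?thesis
    using assms(1,3) mult_subgroups[OF N Z] subset_set_mult_left[OF subgroup.subset[OF N] Z]
    unfolding maximal_subgroup_def by blast
qed

lemma (in comm_group) maximal_subgroup_cosets_int_pow:
  assumes "maximal_subgroup N G" and "z \<in> carrier G" and "z \<notin> N" and "g \<in> carrier G"
  obtains i :: int where "g \<otimes> inv (z [^] i) \<in> N"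
proof -
  have "g \<in> N <#> generate G {z}"
    using maximal_subgroup_set_mult_generate[OF assms(1-3)] assms(4) by blast
  then obtain m i where m: "m \<in> N" and g: "g = m \<otimes> z [^] (i::int)"
    unfolding set_mult_def generate_pow[OF assms(2)] by blast
  have "m \<in> carrier G"
    using m assms(1) subgroup.subset unfolding maximal_subgroup_def by blast
  then have "g \<otimes> inv (z [^] i) = m" using g assms(2) by (simp add: m_assoc)
  then show ?thesis using m by (intro that[of i]) simp
qed

lemma (in comm_group) maximal_subgroup_int_pow_prime_mem:
  assumes "order G = p ^ n" and N: "maximal_subgroup N G" and x: "x \<in> carrier G"
  shows "x [^] int p \<in> N"
proof (rule ccontr)
  assume "x [^] int p \<notin> N"
  then have "x \<notin> N" using N x subgroup_int_pow_closed unfolding maximal_subgroup_def by blast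
  have NG: "subgroup N G" using N unfolding maximal_subgroup_def by blast
  obtain i :: int where "x \<otimes> inv ((x [^] int p) [^] i) \<in> N"
    by (rule maximal_subgroup_cosets_int_pow[OF N int_pow_closed[OF x] \<open>x [^] int p \<notin> N\<close> x])
  then have "x [^] (1 - int p * i) \<in> N" using x by (simp add: int_pow_diff int_pow_pow)
  moreover have "x [^] int (p ^ n) = \<one>"
    using pow_order_eq_1[OF x] assms(1) by (simp only: int_pow_int)
  then have "x [^] int (p ^ n) \<in> N" using subgroup.one_closed[OF NG] by simp
  moreover have "coprime (1 - int p * i) (int p)"
  proof (rule coprimeI)
    fix c assume "c dvd 1 - int p * i" and "c dvd int p"
    then have "c dvd (1 - int p * i) + int p * i" by (intro dvd_add) simp_all
    then show "is_unit c" by simp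
  qed
  then have "coprime (1 - int p * i) (int (p ^ n))" by simp
  ultimately have "x \<in> N" using int_pow_coprime_mem[OF NG x] by blast
  then show False using \<open>x \<notin> N\<close> by blast
qed

lemma (in comm_group) maximal_subgroup_int_pow_mem_iff:
  assumes p: "Factorial_Ring.prime p" and ord: "order G = p ^ n"
    and N: "maximal_subgroup N G" and x: "x \<in> carrier G" "x \<notin> N"
  shows "x [^] (t::int) \<in> N \<longleftrightarrow> int p dvd t"
proof -
  have NG: "subgroup N G" using N unfolding maximal_subgroup_def by blast
  have x_p: "x [^] int p \<in> N" by (rule maximal_subgroup_int_pow_prime_mem[OF ord N x(1)])
  show ?thesis
  proof
    assume t: "x [^] t \<in> N"
    show "int p dvd t"
    proof (rule ccontr)
      assume "\<not> int p dvd t"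
      then have "coprime (int p) t" using p by (simp add: prime_imp_coprime)
      then show False using int_pow_coprime_mem[OF NG x(1) x_p t] x(2) by blast
    qed
  next
    assume "int p dvd t"
    then obtain q where "t = int p * q" by (elim dvdE)
    then show "x [^] t \<in> N"
      using subgroup_int_pow_closed[OF NG x_p] x(1) by (simp add: int_pow_pow)
  qed
qed

lemma (in group) exists_ord_eq_prime:
  assumes "Factorial_Ring.prime p" and "order G = p ^ n"
    and "subgroup K G" and "K \<noteq> {\<one>}"
  obtains y where "y \<in> K" and "ord y = p"
proof -
  obtain z where z: "z \<in> K" "z \<noteq> \<one>"
    using assms(3,4) subgroup.one_closed by blast
  have zc: "z \<in> carrier G" using z(1) assms(3) subgroup.subset by blast
  obtain k where k: "ord z = p ^ k"
    using ord_dvd_group_order[OF zc] assms(1,2) divides_primepow_nat by auto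
  have "k \<noteq> 0" using k z(2) ord_eq_1[OF zc] by auto
  then have "ord (z [^] (p ^ (k - 1))) = p ^ k div p ^ (k - 1)"
    using ord_pow[OF zc] k assms(1) by (simp add: le_imp_power_dvd prime_gt_0_nat)
  also have "\<dots> = p" using \<open>k \<noteq> 0\<close> assms(1) by (cases k) (auto simp: prime_gt_0_nat)
  finally have "ord (z [^] (p ^ (k - 1))) = p" .
  moreover have "z [^] (p ^ (k - 1)) \<in> K"
    using subgroup_int_pow_closed[OF assms(3) z(1), of "int (p ^ (k - 1))"]
    by (simp only: int_pow_int)
  ultimately show ?thesis using that by blast
qed

lemma (in comm_group) maximal_subgroup_coordinate:
  assumes p: "Factorial_Ring.prime p" and ord: "order G = p ^ n"
    and N: "maximal_subgroup N G" and x: "x \<in> carrier G" "x \<notin> N"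
  obtains c :: "'a \<Rightarrow> int"
  where "\<And>g. g \<in> carrier G \<Longrightarrow> g \<otimes> inv (x [^] c g) \<in> N"
    and "\<And>g i. g \<in> carrier G \<Longrightarrow> g \<otimes> inv (x [^] i) \<in> N \<Longrightarrow> int p dvd (i - c g)"
proof
  define c where "c g = (SOME i :: int. g \<otimes> inv (x [^] i) \<in> N)" for g
  have NG: "subgroup N G" using N unfolding maximal_subgroup_def by blast
  show c: "g \<otimes> inv (x [^] c g) \<in> N" if g: "g \<in> carrier G" for g
  proof -
    obtain i :: int where "g \<otimes> inv (x [^] i) \<in> N"
      by (rule maximal_subgroup_cosets_int_pow[OF N x g])
    then show ?thesis unfolding c_def by (rule someI[where P = "\<lambda>i. g \<otimes> inv (x [^] i) \<in> N"])
  qed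
  show "int p dvd (i - c g)" if g: "g \<in> carrier G" and i: "g \<otimes> inv (x [^] i) \<in> N" for g i
  proof -
    have "x [^] (i - c g) = inv (g \<otimes> inv (x [^] i)) \<otimes> (g \<otimes> inv (x [^] c g))"
      using g x(1) by (simp add: inv_mult_group m_assoc[symmetric]) (simp add: m_assoc int_pow_diff)
    also have "\<dots> \<in> N"
      using c[OF g] i subgroup.m_closed[OF NG] subgroup.m_inv_closed[OF NG] by blast
    finally show ?thesis using maximal_subgroup_int_pow_mem_iff[OF p ord N x] by blast
  qed
qed

lemma (in group) finite_endo_iso_of_trivial_kernel:
  assumes "finite (carrier G)" and hom: "\<phi> \<in> hom G G"
    and "\<And>g. g \<in> carrier G \<Longrightarrow> \<phi> g = \<one> \<Longrightarrow> g = \<one>"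
  shows "\<phi> \<in> iso G G"
proof -
  interpret group_hom G G \<phi> using hom by (simp add: group_hom_def group_hom_axioms_def)
  have "kernel G G \<phi> = {\<one>}" using assms(3) by (auto simp: kernel_def)
  then have inj: "inj_on \<phi> (carrier G)" using inj_iff_trivial_ker by blast
  moreover have "\<phi> ` carrier G \<subseteq> carrier G" using hom by (auto simp: hom_def)
  ultimately have "\<phi> ` carrier G = carrier G" using endo_inj_surj[OF assms(1)] by blast
  then show ?thesis using hom inj by (simp add: iso_def bij_betw_def)
qed

lemma (in comm_group) exists_iso_shift:
  assumes fin: "finite (carrier G)" and p: "Factorial_Ring.prime p" and ord: "order G = p ^ n"
    and N: "maximal_subgroup N G" and x: "x \<in> carrier G" "x \<notin> N"
    and y: "y \<in> N" "ord y = p"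
  shows "\<exists>\<phi> \<in> iso G G. \<phi> x = x \<otimes> y"
proof -
  have NG: "subgroup N G" using N unfolding maximal_subgroup_def by blast
  have yc: "y \<in> carrier G" using y(1) NG subgroup.subset by blast
  obtain c :: "'a \<Rightarrow> int" where c: "\<And>g. g \<in> carrier G \<Longrightarrow> g \<otimes> inv (x [^] c g) \<in> N"
    and c_unique: "\<And>g i. g \<in> carrier G \<Longrightarrow> g \<otimes> inv (x [^] i) \<in> N \<Longrightarrow> int p dvd (i - c g)"
    using maximal_subgroup_coordinate[OF p ord N x] by blast
  have y_pow_c: "y [^] c g = y [^] i" if "g \<in> carrier G" and "g \<otimes> inv (x [^] i) \<in> N" for g and i :: int
    using c_unique[OF that] int_pow_eq[OF yc] y(2) by simp
  define \<phi> where "\<phi> g = g \<otimes> y [^] c g" for g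
  have hom: "\<phi> \<in> hom G G"
  proof (rule homI)
    fix g h assume gh: "g \<in> carrier G" "h \<in> carrier G"
    have "(g \<otimes> h) \<otimes> inv (x [^] (c g + c h)) = (g \<otimes> inv (x [^] c g)) \<otimes> (h \<otimes> inv (x [^] c h))"
      using gh x(1) by (simp add: int_pow_mult inv_mult m_ac)
    also have "\<dots> \<in> N" using c gh subgroup.m_closed[OF NG] by blast
    finally have "y [^] c (g \<otimes> h) = y [^] c g \<otimes> y [^] c h"
      using y_pow_c gh yc by (simp add: int_pow_mult)
    then show "\<phi> (g \<otimes> h) = \<phi> g \<otimes> \<phi> h"
      unfolding \<phi>_def using gh yc by (simp add: m_ac)
  qed (simp add: \<phi>_def yc)
  have "g = \<one>" if g: "g \<in> carrier G" "\<phi> g = \<one>" for g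
  proof -
    have "g = inv (y [^] c g)" using g yc unfolding \<phi>_def by (simp add: inv_equality)
    then have "g \<in> N" using subgroup.m_inv_closed[OF NG subgroup_int_pow_closed[OF NG y(1)]] by metis
    then have "g \<otimes> inv (x [^] (0::int)) \<in> N" using g(1) by simp
    then have "y [^] c g = y [^] (0::int)" using y_pow_c g(1) by blast
    then show ?thesis using g unfolding \<phi>_def by simp
  qed
  then have "\<phi> \<in> iso G G" by (rule finite_endo_iso_of_trivial_kernel[OF fin hom])
  moreover have "y [^] c x = y [^] (1::int)"
    using y_pow_c[OF x(1)] x(1) subgroup.one_closed[OF NG] by simp
  then have "\<phi> x = x \<otimes> y" unfolding \<phi>_def using yc by simp
  ultimately show ?thesis by blast
qed

lemma (in comm_group) direct_factor_not_characteristic: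
  assumes fin: "finite (carrier G)" and p: "Factorial_Ring.prime p" and ord: "order G = p ^ n"
    and H: "subgroup H G" and K: "subgroup K G"
    and HK_inter: "H \<inter> K = {\<one>}" and HK_mult: "H <#> K = carrier G"
    and H_nontriv: "H \<noteq> {\<one>}" and K_nontriv: "K \<noteq> {\<one>}"
  shows "\<not> characteristic_subgroup H G"
proof
  assume char: "characteristic_subgroup H G"
  have "K \<noteq> carrier G"
  proof
    assume "K = carrier G"
    then have "H = {\<one>}" using HK_inter subgroup.subset[OF H] by (simp add: Int_absorb2)
    then show False using H_nontriv by blast
  qed
  then obtain N where N: "maximal_subgroup N G" and KN: "K \<subseteq> N"
    using exists_maximal_subgroup[OF fin K] by blast
  have NG: "subgroup N G" and N_proper: "N \<noteq> carrier G"
    using N unfolding maximal_subgroup_def by blast+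
  have "\<not> H \<subseteq> N"
  proof
    assume "H \<subseteq> N"
    then have "H <#> K \<subseteq> N" unfolding set_mult_def using KN subgroup.m_closed[OF NG] by blast
    then show False using HK_mult N_proper subgroup.subset[OF NG] by blast
  qed
  then obtain x where xH: "x \<in> H" and xN: "x \<notin> N" by blast
  obtain y where yK: "y \<in> K" and y_ord: "ord y = p"
    using exists_ord_eq_prime[OF p ord K K_nontriv] by blast
  have xc: "x \<in> carrier G" and yc: "y \<in> carrier G"
    using xH yK H K subgroup.subset by blast+
  obtain \<phi> where \<phi>: "\<phi> \<in> iso G G" and \<phi>x: "\<phi> x = x \<otimes> y"
    using exists_iso_shift[OF fin p ord N xc xN subsetD[OF KN yK] y_ord] by blast
  have "\<phi> ` H = H" using char \<phi> unfolding characteristic_subgroup_def by blast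
  then have "x \<otimes> y \<in> H" using xH \<phi>x by (metis imageI)
  then have "inv x \<otimes> (x \<otimes> y) \<in> H"
    by (rule subgroup.m_closed[OF H subgroup.m_inv_closed[OF H xH]])
  then have "y \<in> H \<inter> K" using xc yc yK by (simp add: m_assoc[symmetric])
  then have "p = 1" using HK_inter y_ord by simp
  then show False using p by simp
qed

lemma (in group) Char_subgroup: "H \<in> Char G \<Longrightarrow> subgroup H G"
  unfolding Char_def characteristic_subgroup_def by simp

lemma (in group) Char_trivial: "{\<one>} \<in> Char G"
  unfolding Char_def characteristic_subgroup_def
  using hom_one[OF _ is_group is_group] by (auto simp: triv_subgroup iso_def)

lemma (in group) Char_carrier: "carrier G \<in> Char G"
  unfolding Char_def characteristic_subgroup_def
  by (auto simp: iso_def bij_betw_def subgroup_self)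

lemma (in group) Char_Int:
  assumes "H \<in> Char G" and "K \<in> Char G"
  shows "H \<inter> K \<in> Char G"
  unfolding Char_def characteristic_subgroup_def
proof (intro CollectI conjI ballI)
  show "subgroup (H \<inter> K) G" using assms Char_subgroup subgroups_Inter_pair by blast
  fix \<phi> assume \<phi>: "\<phi> \<in> iso G G"
  then have "\<phi> ` (H \<inter> K) = \<phi> ` H \<inter> \<phi> ` K"
    using assms Char_subgroup subgroup.subset
    by (intro inj_on_image_Int) (auto simp: iso_def bij_betw_def)
  also have "\<dots> = H \<inter> K" using assms \<phi> unfolding Char_def characteristic_subgroup_def by simp
  finally show "\<phi> ` (H \<inter> K) = H \<inter> K" .
qed

lemma (in comm_group) Char_set_mult:
  assumes "H \<in> Char G" and "K \<in> Char G"
  shows "H <#> K \<in> Char G"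
  unfolding Char_def characteristic_subgroup_def
proof (intro CollectI conjI ballI)
  show "subgroup (H <#> K) G" using assms Char_subgroup mult_subgroups by blast
  fix \<phi> assume \<phi>: "\<phi> \<in> iso G G"
  then have "\<phi> ` (H <#> K) = \<phi> ` H <#> \<phi> ` K"
    using assms Char_subgroup subgroup.subset by (intro set_mult_hom) (auto simp: iso_def)
  also have "\<dots> = H <#> K" using assms \<phi> unfolding Char_def characteristic_subgroup_def by simp
  finally show "\<phi> ` (H <#> K) = H <#> K" .
qed

lemma order_bounds_distinct:
  fixes a0 a1 :: "'a::order"
  assumes "\<And>a. a0 \<le> a \<and> a \<le> a1" and "\<exists>x y :: 'a. x \<noteq> y"
  shows "a0 \<noteq> a1"
  using assms by (metis order_antisym)

lemma prod_order_iso_complements: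
  fixes f :: "'c set \<Rightarrow> ('a::order) \<times> ('b::order)"
  assumes bij: "bij_betw f S UNIV"
    and le_iff: "\<forall>H \<in> S. \<forall>K \<in> S. H \<subseteq> K \<longleftrightarrow> (fst (f H) \<le> fst (f K) \<and> snd (f H) \<le> snd (f K))"
    and B: "B \<in> S" "\<forall>L \<in> S. B \<subseteq> L" and T: "T \<in> S" "\<forall>L \<in> S. L \<subseteq> T"
    and nontriv: "\<exists>x y :: 'a. x \<noteq> y" "\<exists>x y :: 'b. x \<noteq> y"
  obtains H K where "H \<in> S" "K \<in> S" "H \<noteq> B" "K \<noteq> B"
    and "\<forall>L \<in> S. L \<subseteq> H \<longrightarrow> L \<subseteq> K \<longrightarrow> L = B"
    and "\<forall>L \<in> S. H \<subseteq> L \<longrightarrow> K \<subseteq> L \<longrightarrow> L = T"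
proof -
  have le: "H \<subseteq> K \<longleftrightarrow> fst (f H) \<le> fst (f K) \<and> snd (f H) \<le> snd (f K)"
    if "H \<in> S" "K \<in> S" for H K
    using le_iff that by blast
  obtain a0 b0 where f_B: "f B = (a0, b0)" by fastforce
  obtain a1 b1 where f_T: "f T = (a1, b1)" by fastforce
  have surj: "\<exists>L \<in> S. f L = u" for u
    using bij by (metis bij_betw_imp_surj_on UNIV_I imageE)
  have bounds: "a0 \<le> a \<and> a \<le> a1 \<and> b0 \<le> b \<and> b \<le> b1" for a b
  proof -
    obtain L where L: "L \<in> S" "f L = (a, b)" using surj by blast
    have "B \<subseteq> L" and "L \<subseteq> T" using B(2) T(2) L(1) by blast+
    then show ?thesis using le[OF B(1) L(1)] le[OF L(1) T(1)] L(2) f_B f_T by simp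
  qed
  obtain H where H: "H \<in> S" "f H = (a1, b0)" using surj by blast
  obtain K where K: "K \<in> S" "f K = (a0, b1)" using surj by blast
  have "a0 \<noteq> a1" using bounds by (intro order_bounds_distinct nontriv(1)) blast
  moreover have "b0 \<noteq> b1" using bounds by (intro order_bounds_distinct nontriv(2)) blast
  ultimately have H_nontriv: "H \<noteq> B" and K_nontriv: "K \<noteq> B"
    using H(2) K(2) f_B by auto
  have meet: "L = B" if L: "L \<in> S" "L \<subseteq> H" "L \<subseteq> K" for L
  proof -
    have "L \<subseteq> B" using le[OF L(1) H(1)] le[OF L(1) K(1)] le[OF L(1) B(1)] L(2,3) H(2) K(2) f_B
      by simp
    then show ?thesis using B(2) L(1) by blast
  qed
  have join: "L = T" if L: "L \<in> S" "H \<subseteq> L" "K \<subseteq> L" for L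
  proof -
    have "T \<subseteq> L" using le[OF H(1) L(1)] le[OF K(1) L(1)] le[OF T(1) L(1)] L(2,3) H(2) K(2) f_T
      by simp
    then show ?thesis using T(2) L(1) by blast
  qed
  show ?thesis using that[OF H(1) K(1) H_nontriv K_nontriv] meet join by blast
qed

lemma (in comm_group) Char_not_prod_order_iso:
  fixes f :: "'a set \<Rightarrow> ('c::order) \<times> ('d::order)"
  assumes fin: "finite (carrier G)" and p: "Factorial_Ring.prime p" and ord: "order G = p ^ n"
    and nontriv: "\<exists>x y :: 'c. x \<noteq> y" "\<exists>x y :: 'd. x \<noteq> y"
  shows "\<not> (bij_betw f (Char G) UNIV \<and>
            (\<forall>H \<in> Char G. \<forall>K \<in> Char G.
               H \<subseteq> K \<longleftrightarrow> (fst (f H) \<le> fst (f K) \<and> snd (f H) \<le> snd (f K))))"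
proof (rule notI, elim conjE)
  assume bij: "bij_betw f (Char G) UNIV"
    and le_iff: "\<forall>H \<in> Char G. \<forall>K \<in> Char G.
           H \<subseteq> K \<longleftrightarrow> (fst (f H) \<le> fst (f K) \<and> snd (f H) \<le> snd (f K))"
  have Char_one: "\<forall>L \<in> Char G. {\<one>} \<subseteq> L" and Char_subset: "\<forall>L \<in> Char G. L \<subseteq> carrier G"
    using Char_subgroup subgroup.one_closed subgroup.subset by blast+
  obtain H K where H: "H \<in> Char G" and K: "K \<in> Char G"
    and H_nontriv: "H \<noteq> {\<one>}" and K_nontriv: "K \<noteq> {\<one>}"
    and meet: "\<forall>L \<in> Char G. L \<subseteq> H \<longrightarrow> L \<subseteq> K \<longrightarrow> L = {\<one>}"
    and join: "\<forall>L \<in> Char G. H \<subseteq> L \<longrightarrow> K \<subseteq> L \<longrightarrow> L = carrier G"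
    by (rule prod_order_iso_complements[OF bij le_iff Char_trivial Char_one Char_carrier Char_subset nontriv])
  have "H \<inter> K = {\<one>}"
    by (rule meet[rule_format, OF Char_Int[OF H K] Int_lower1 Int_lower2])
  moreover have "H <#> K = carrier G"
    by (rule join[rule_format, OF Char_set_mult[OF H K]
          subset_set_mult_left[OF bspec[OF Char_subset H] Char_subgroup[OF K]]
          subset_set_mult_right[OF Char_subgroup[OF H] bspec[OF Char_subset K]]])
  ultimately have "\<not> characteristic_subgroup H G"
    by (rule direct_factor_not_characteristic[OF fin p ord Char_subgroup[OF H] Char_subgroup[OF K]
          _ _ H_nontriv K_nontriv])
  then show False using H unfolding Char_def by simp
qed

theorem mainTheorem14:
  fixes G :: "('g, 'm) monoid_scheme" and p :: nat
    and f :: "'g set \<Rightarrow> ('a::lattice) \<times> ('b::lattice)"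
  assumes "comm_group G" and "finite (carrier G)"
    and "Factorial_Ring.prime p" and "\<exists>n. order G = p ^ n"
    and "\<exists>x y :: 'a. x \<noteq> y" and "\<exists>x y :: 'b. x \<noteq> y"
  shows "\<not> (bij_betw f (Char G) UNIV \<and>
            (\<forall>H \<in> Char G. \<forall>K \<in> Char G.
               H \<subseteq> K \<longleftrightarrow> (fst (f H) \<le> fst (f K) \<and> snd (f H) \<le> snd (f K))))"
proof -
  obtain n where "order G = p ^ n" using assms(4) by blast
  then show ?thesis
    using comm_group.Char_not_prod_order_iso[OF assms(1,2,3) _ assms(5,6)] by blast
qed

end
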